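(* Let $a<b$ and let $X$ be a random variable taking values in $[a,b]$, with probability density function $f:[a,b]\rightarrow[0,1]$ and cumulative distribution function $F(x)=\Pr(X\le x)=\int_a^x f(t)\,dt$. Assume that $F$ is absolutely continuous with $F'=f\in L^2[a,b]$, and let $\sigma(f)=\|f\|_2^2-\frac{1}{b-a}$. Then for all $x\in[a,\frac{a+b}{2}]$, \[ \left|\frac{1}{2}[F(x)+F(a+b-x)]-\frac{b-E(X)}{b-a}\right|\leq (b-a)^{-1/2} \left[\frac{(b-a)^2}{48}+\left(x-\frac{3a+b}{4}\right)^2\right]^{1/2}\sqrt{\sigma(f)}, \] where $E(X)$ is the expectation of $X$.
   Context: $\|g\|_2=\left(\int_a^b g(t)^2\,dt\right)^{1/2}$. *)

theory Defs
  imports "HOL-Probability.Probability"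
begin

definition sigma_f :: "real \<Rightarrow> real \<Rightarrow> (real \<Rightarrow> real) \<Rightarrow> real" where
  "sigma_f a b f = integral {a..b} (\<lambda>t. (f t)\<^sup>2) - 1 / (b - a)"

end

theory Submission
  imports Defs
begin

text \<open>
  Let \<open>\<phi>(t) = (1[t \<le> x] + 1[t \<le> a + b - x]) / 2 - (b - t) / (b - a)\<close>. The left-hand side
  is \<open>E[\<phi>(X)]\<close>, the integral of \<open>\<phi> f\<close> over \<open>[a, b]\<close>. Since \<open>\<phi>\<close> has mean zero on \<open>[a, b]\<close>,
  this is also the integral of \<open>\<phi> (f - 1/(b - a))\<close>, so Cauchy--Schwarz bounds it by
  \<open>\<parallel>\<phi>\<parallel> \<parallel>f - 1/(b - a)\<parallel>\<close> in \<open>L\<^sup>2[a, b]\<close>. Because \<open>f\<close> integrates to 1, the second factor is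
  \<open>sqrt \<sigma>(f)\<close>, and direct integration gives \<open>\<parallel>\<phi>\<parallel>\<^sup>2 = ((b - a)\<^sup>2/48 + (x - (3a + b)/4)\<^sup>2) / (b - a)\<close>.
\<close>

lemma quadratic_nonneg_imp_discriminant_le:
  fixes A B Q :: real
  assumes "0 \<le> A" and nonneg: "\<And>t. 0 \<le> A * t\<^sup>2 - 2 * Q * t + B"
  shows "Q\<^sup>2 \<le> A * B"
proof (cases "A = 0")
  case True
  have "Q = 0"
  proof (rule ccontr)
    assume "Q \<noteq> 0"
    then have "A * ((B + 1) / (2 * Q))\<^sup>2 - 2 * Q * ((B + 1) / (2 * Q)) + B = -1"
      using True by (simp add: field_simps)
    with nonneg show False by (metis neg_0_le_iff_le not_one_le_zero)
  qed
  then show ?thesis using True by simp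
next
  case False
  have "0 \<le> A * (Q / A)\<^sup>2 - 2 * Q * (Q / A) + B" by (rule nonneg)
  also have "\<dots> = B - Q\<^sup>2 / A" using False by (simp add: field_simps power2_eq_square)
  finally show ?thesis using False \<open>0 \<le> A\<close> by (simp add: field_simps)
qed

lemma Cauchy_Schwarz_integral:
  fixes f g :: "'a \<Rightarrow> real"
  assumes "integrable M (\<lambda>x. (f x)\<^sup>2)" "integrable M (\<lambda>x. (g x)\<^sup>2)" "integrable M (\<lambda>x. f x * g x)"
  shows "(\<integral>x. f x * g x \<partial>M)\<^sup>2 \<le> (\<integral>x. (f x)\<^sup>2 \<partial>M) * (\<integral>x. (g x)\<^sup>2 \<partial>M)"
proof (rule quadratic_nonneg_imp_discriminant_le)
  show "0 \<le> (\<integral>x. (f x)\<^sup>2 \<partial>M)" by simp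
  fix t :: real
  have "(\<lambda>x. (t * f x - g x)\<^sup>2) = (\<lambda>x. t\<^sup>2 * (f x)\<^sup>2 - 2 * t * (f x * g x) + (g x)\<^sup>2)"
    by (auto simp: power2_eq_square algebra_simps)
  then have "(\<integral>x. (t * f x - g x)\<^sup>2 \<partial>M)
      = t\<^sup>2 * (\<integral>x. (f x)\<^sup>2 \<partial>M) - 2 * t * (\<integral>x. f x * g x \<partial>M) + (\<integral>x. (g x)\<^sup>2 \<partial>M)"
    using assms by simp
  moreover have "0 \<le> (\<integral>x. (t * f x - g x)\<^sup>2 \<partial>M)" by simp
  ultimately show "0 \<le> (\<integral>x. (f x)\<^sup>2 \<partial>M) * t\<^sup>2 - 2 * (\<integral>x. f x * g x \<partial>M) * t + (\<integral>x. (g x)\<^sup>2 \<partial>M)"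
    by (simp add: mult_ac)
qed

lemma integrable_lborel_bounded_Icc:
  fixes h :: "real \<Rightarrow> real"
  assumes "h \<in> borel_measurable lborel" "\<And>t. \<bar>h t\<bar> \<le> C * indicator {a..b} t"
  shows "integrable lborel h"
proof (rule Bochner_Integration.integrable_bound[OF _ assms(1)])
  show "integrable lborel (\<lambda>t. C * indicator {a..b} t)"
    using borel_integrable_atLeastAtMost[of a b "\<lambda>_. C"] by simp
  show "AE t in lborel. norm (h t) \<le> norm (C * indicator {a..b} t)"
    using assms(2) by (intro AE_I2) (smt (verit) real_norm_def)
qed

lemma integral_shifted_power_Icc:
  fixes p q r :: real
  assumes "p \<le> q"
  shows "(\<integral>t. (t - r) ^ n * indicator {p..q} t \<partial>lborel) = ((q - r) ^ Suc n - (p - r) ^ Suc n) / Suc n"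
proof (subst integral_FTC_Icc_real)
  fix t show "DERIV (\<lambda>t. (t - r) ^ Suc n / Suc n) t :> (t - r) ^ n"
    by (intro derivative_eq_intros) auto
qed (use assms in \<open>auto simp: diff_divide_distrib\<close>)

lemma integrable_shifted_power_Icc:
  fixes p q r :: real
  shows "integrable lborel (\<lambda>t. (t - r) ^ n * indicator {p..q} t)"
  by (rule borel_integrable_atLeastAtMost) (intro continuous_intros)

lemma abs_mult_le_indicator:
  fixes u v :: real
  assumes "\<bar>u\<bar> \<le> C * indicator S t" "\<bar>v\<bar> \<le> D * indicator S t"
  shows "\<bar>u * v\<bar> \<le> (C * D) * indicator S t"
  using assms mult_mono[of "\<bar>u\<bar>" C "\<bar>v\<bar>" D]
  by (cases "t \<in> S") (auto simp: abs_mult)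

lemma integrable_lborel_mult_bounded_Icc:
  fixes u v :: "real \<Rightarrow> real"
  assumes "u \<in> borel_measurable lborel" "v \<in> borel_measurable lborel"
    and "\<And>t. \<bar>u t\<bar> \<le> C * indicator {a..b} t" "\<And>t. \<bar>v t\<bar> \<le> D * indicator {a..b} t"
  shows "integrable lborel (\<lambda>t. u t * v t)"
  by (rule integrable_lborel_bounded_Icc[OF _ abs_mult_le_indicator[OF assms(3,4)]])
    (use assms(1,2) in measurable)

lemma integral_square_indicator_Icc:
  fixes f :: "real \<Rightarrow> real"
  assumes "(\<lambda>t. indicator {a..b} t * f t) \<in> borel_measurable lborel"
    and "\<And>t. t \<in> {a..b} \<Longrightarrow> \<bar>f t\<bar> \<le> C"
  shows "(\<integral>t. (indicator {a..b} t * f t)\<^sup>2 \<partial>lborel) = integral {a..b} (\<lambda>t. (f t)\<^sup>2)"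
proof -
  have bound: "\<bar>indicator {a..b} t * f t\<bar> \<le> C * indicator {a..b} t" for t
    using assms(2) by (simp add: indicator_def)
  have "integrable lborel (\<lambda>t. (indicator {a..b} t * f t)\<^sup>2)"
    unfolding power2_eq_square
    by (rule integrable_lborel_mult_bounded_Icc[OF assms(1) assms(1) bound bound])
  moreover have "(indicator {a..b} t * f t)\<^sup>2 = indicator {a..b} t *\<^sub>R (f t)\<^sup>2" for t
    by (simp add: indicator_def)
  ultimately show ?thesis
    using set_borel_integral_eq_integral(2)[of "{a..b}" "\<lambda>t. (f t)\<^sup>2"]
    by (simp add: set_integrable_def set_lebesgue_integral_def)
qed

lemma integral_square_minus_mean_Icc:
  fixes g :: "real \<Rightarrow> real"
  assumes "a < b" and [measurable]: "g \<in> borel_measurable lborel"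
    and g_bound: "\<And>t. \<bar>g t\<bar> \<le> D * indicator {a..b} t"
  shows "(\<integral>t. (g t - (\<integral>s. g s \<partial>lborel) / (b - a) * indicator {a..b} t)\<^sup>2 \<partial>lborel)
    = (\<integral>t. (g t)\<^sup>2 \<partial>lborel) - (\<integral>t. g t \<partial>lborel)\<^sup>2 / (b - a)"
proof -
  define c where "c = (\<integral>t. g t \<partial>lborel) / (b - a)"
  have g_supp: "g t * indicator {a..b} t = g t" for t
  proof (cases "t \<in> {a..b}")
    case False
    with g_bound[of t] show ?thesis by simp
  qed simp
  have int_g: "integrable lborel g"
    by (rule integrable_lborel_bounded_Icc[OF _ g_bound]) measurable
  have int_gg: "integrable lborel (\<lambda>t. (g t)\<^sup>2)"
    unfolding power2_eq_square by (rule integrable_lborel_mult_bounded_Icc[OF _ _ g_bound g_bound]) measurable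
  have int_ind: "integrable lborel (\<lambda>t. indicator {a..b} t :: real)"
    using borel_integrable_atLeastAtMost[of a b "\<lambda>_. 1"] by simp
  have "(\<integral>t. (g t - c * indicator {a..b} t)\<^sup>2 \<partial>lborel)
      = (\<integral>t. (g t)\<^sup>2 - 2 * c * (g t * indicator {a..b} t) + c\<^sup>2 * indicator {a..b} t \<partial>lborel)"
    by (intro Bochner_Integration.integral_cong)
      (simp_all add: power2_eq_square algebra_simps split: split_indicator)
  also have "\<dots> = (\<integral>t. (g t)\<^sup>2 \<partial>lborel) - 2 * c * (\<integral>t. g t \<partial>lborel) + c\<^sup>2 * (b - a)"
    using int_g int_gg int_ind \<open>a < b\<close> by (simp add: g_supp)
  also have "\<dots> = (\<integral>t. (g t)\<^sup>2 \<partial>lborel) - c * (\<integral>t. g t \<partial>lborel)"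
    using \<open>a < b\<close> by (simp add: c_def power2_eq_square)
  also have "\<dots> = (\<integral>t. (g t)\<^sup>2 \<partial>lborel) - (\<integral>t. g t \<partial>lborel)\<^sup>2 / (b - a)"
    by (simp add: c_def power2_eq_square)
  finally show ?thesis by (simp add: c_def)
qed

lemma integral_mean_zero_mult_square_le:
  fixes K g :: "real \<Rightarrow> real"
  assumes "a < b"
    and [measurable]: "K \<in> borel_measurable lborel" "g \<in> borel_measurable lborel"
    and K_bound: "\<And>t. \<bar>K t\<bar> \<le> C * indicator {a..b} t"
    and g_bound: "\<And>t. \<bar>g t\<bar> \<le> D * indicator {a..b} t"
    and K_mean: "(\<integral>t. K t \<partial>lborel) = 0"
  shows "(\<integral>t. K t * g t \<partial>lborel)\<^sup>2
    \<le> (\<integral>t. (K t)\<^sup>2 \<partial>lborel) * ((\<integral>t. (g t)\<^sup>2 \<partial>lborel) - (\<integral>t. g t \<partial>lborel)\<^sup>2 / (b - a))"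
proof -
  define c where "c = (\<integral>t. g t \<partial>lborel) / (b - a)"
  define h where "h t = g t - c * indicator {a..b} t" for t
  have [measurable]: "h \<in> borel_measurable lborel" unfolding h_def by measurable
  have h_bound: "\<bar>h t\<bar> \<le> (D + \<bar>c\<bar>) * indicator {a..b} t" for t
  proof -
    have "\<bar>h t\<bar> \<le> \<bar>g t\<bar> + \<bar>c\<bar> * indicator {a..b} t"
      unfolding h_def using abs_triangle_ineq4[of "g t" "c * indicator {a..b} t"] by (simp add: abs_mult)
    also have "\<dots> \<le> D * indicator {a..b} t + \<bar>c\<bar> * indicator {a..b} t"
      using g_bound by simp
    finally show ?thesis by (simp add: distrib_right)
  qed
  have K_supp: "K t * indicator {a..b} t = K t" for t
  proof (cases "t \<in> {a..b}")
    case False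
    with K_bound[of t] show ?thesis by simp
  qed simp
  have int: "integrable lborel K" "integrable lborel (\<lambda>t. K t * g t)"
    "integrable lborel (\<lambda>t. K t * h t)" "integrable lborel (\<lambda>t. (K t)\<^sup>2)"
    "integrable lborel (\<lambda>t. (h t)\<^sup>2)"
    unfolding power2_eq_square
    by (rule integrable_lborel_bounded_Icc[OF _ K_bound] integrable_lborel_mult_bounded_Icc[OF _ _ K_bound g_bound]
        integrable_lborel_mult_bounded_Icc[OF _ _ K_bound h_bound]
        integrable_lborel_mult_bounded_Icc[OF _ _ K_bound K_bound]
        integrable_lborel_mult_bounded_Icc[OF _ _ h_bound h_bound]; measurable)+
  have "(\<integral>t. K t * h t \<partial>lborel) = (\<integral>t. K t * g t - c * (K t * indicator {a..b} t) \<partial>lborel)"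
    by (intro Bochner_Integration.integral_cong) (simp_all add: h_def right_diff_distrib)
  also have "\<dots> = (\<integral>t. K t * g t \<partial>lborel)"
    using int K_mean by (simp add: K_supp)
  finally have "(\<integral>t. K t * h t \<partial>lborel) = (\<integral>t. K t * g t \<partial>lborel)" .
  moreover have "(\<integral>t. (h t)\<^sup>2 \<partial>lborel) = (\<integral>t. (g t)\<^sup>2 \<partial>lborel) - (\<integral>t. g t \<partial>lborel)\<^sup>2 / (b - a)"
    unfolding h_def c_def by (rule integral_square_minus_mean_Icc[OF \<open>a < b\<close> _ g_bound]) measurable
  ultimately show ?thesis
    using Cauchy_Schwarz_integral[of lborel K h] int by simp
qed

definition cdf_kernel :: "real \<Rightarrow> real \<Rightarrow> real \<Rightarrow> real \<Rightarrow> real" where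
  "cdf_kernel a b x t = (indicator {..x} t + indicator {..a + b - x} t) / 2 - (b - t) / (b - a)"

lemma cdf_kernel_bound:
  assumes "a < b"
  shows "\<bar>cdf_kernel a b x t * indicator {a..b} t\<bar> \<le> 1 * indicator {a..b} t"
proof (cases "t \<in> {a..b}")
  case True
  define w where "w = (b - t) / (b - a)"
  have "0 \<le> w" "w \<le> 1"
    using True assms by (auto simp: w_def)
  moreover have "cdf_kernel a b x t = (indicator {..x} t + indicator {..a + b - x} t) / 2 - w"
    by (simp add: cdf_kernel_def w_def)
  ultimately show ?thesis
    using True by (auto simp: indicator_def abs_le_iff)
qed simp

lemma integral_cdf_kernel:
  assumes "a < b" "x \<in> {a..b}"
  shows "(\<integral>t. cdf_kernel a b x t * indicator {a..b} t \<partial>lborel) = 0"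
proof -
  define x' where "x' = a + b - x"
  have x: "a \<le> x" "a \<le> x'" "x \<le> b" "x' \<le> b" using assms by (auto simp: x'_def)
  have "cdf_kernel a b x t * indicator {a..b} t
      = (indicator {a..x} t + indicator {a..x'} t) / 2 + (t - b) ^ 1 * indicator {a..b} t / (b - a)" for t
    using x \<open>a < b\<close> by (auto simp: cdf_kernel_def indicator_def x'_def field_simps)
  then have "(\<integral>t. cdf_kernel a b x t * indicator {a..b} t \<partial>lborel)
      = ((x - a) + (x' - a)) / 2 + (- (a - b)\<^sup>2 / 2) / (b - a)"
    using x \<open>a < b\<close> integral_shifted_power_Icc[of a b b 1] integrable_shifted_power_Icc[of b 1 a b]
    by (simp add: power2_eq_square)
  also have "\<dots> = 0"
    using \<open>a < b\<close> by (simp add: x'_def field_simps power2_eq_square)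
  finally show ?thesis .
qed

lemma integral_cdf_kernel_square:
  assumes "a < b" "x \<in> {a..(a + b) / 2}"
  shows "(\<integral>t. (cdf_kernel a b x t * indicator {a..b} t)\<^sup>2 \<partial>lborel)
    = ((b - a)\<^sup>2 / 48 + (x - (3 * a + b) / 4)\<^sup>2) / (b - a)"
proof -
  define x' where "x' = a + b - x"
  have x: "a \<le> x" "x \<le> x'" "x' \<le> b" using assms by (auto simp: x'_def)
  have square: "(cdf_kernel a b x t * indicator {a..b} t)\<^sup>2
      = (3 * indicator {a..x} t + indicator {a..x'} t) / 4
        + ((t - b) * indicator {a..x} t + (t - b) * indicator {a..x'} t) / (b - a)
        + (t - b) ^ 2 * indicator {a..b} t / (b - a)\<^sup>2" for t
  proof -
    define w where "w = (b - t) / (b - a)"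
    have kernel: "cdf_kernel a b x t = (indicator {..x} t + indicator {..x'} t) / 2 - w"
      by (simp add: cdf_kernel_def w_def x'_def)
    have "(cdf_kernel a b x t * indicator {a..b} t)\<^sup>2
        = (3 * indicator {a..x} t + indicator {a..x'} t) / 4
          - w * (indicator {a..x} t + indicator {a..x'} t) + w\<^sup>2 * indicator {a..b} t"
      unfolding kernel using x by (auto simp: indicator_def power2_eq_square algebra_simps)
    also have "\<dots> = (3 * indicator {a..x} t + indicator {a..x'} t) / 4
        + ((t - b) * indicator {a..x} t + (t - b) * indicator {a..x'} t) / (b - a)
        + (t - b) ^ 2 * indicator {a..b} t / (b - a)\<^sup>2"
      using \<open>a < b\<close> by (simp add: w_def field_simps power2_eq_square)
    finally show ?thesis .
  qed
  have linear: "(\<integral>t. (t - b) * indicator {a..y} t \<partial>lborel) = ((y - b)\<^sup>2 - (a - b)\<^sup>2) / 2"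
    if "a \<le> y" for y
    using integral_shifted_power_Icc[OF that, of b 1] by (simp add: power2_eq_square)
  have quadratic: "(\<integral>t. (t - b) ^ 2 * indicator {a..b} t \<partial>lborel) = (b - a) ^ 3 / 3"
    using integral_shifted_power_Icc[of a b b 2] \<open>a < b\<close> by (simp add: numeral_3_eq_3 power3_eq_cube algebra_simps)
  have "(\<integral>t. (cdf_kernel a b x t * indicator {a..b} t)\<^sup>2 \<partial>lborel)
      = (3 * (x - a) + (x' - a)) / 4
        + (((x - b)\<^sup>2 - (a - b)\<^sup>2) / 2 + ((x' - b)\<^sup>2 - (a - b)\<^sup>2) / 2) / (b - a)
        + ((b - a) ^ 3 / 3) / (b - a)\<^sup>2"
    unfolding square using x
      integrable_shifted_power_Icc[of b 1 a x] integrable_shifted_power_Icc[of b 1 a x']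
      integrable_shifted_power_Icc[of b 2 a b]
    by (simp add: linear quadratic)
  also have "((b - a) ^ 3 / 3) / (b - a)\<^sup>2 = (b - a) / 3"
    using \<open>a < b\<close> by (simp add: power2_eq_square power3_eq_cube)
  also have "(3 * (x - a) + (x' - a)) / 4
        + (((x - b)\<^sup>2 - (a - b)\<^sup>2) / 2 + ((x' - b)\<^sup>2 - (a - b)\<^sup>2) / 2) / (b - a) + (b - a) / 3
      = ((b - a)\<^sup>2 / 48 + (x - (3 * a + b) / 4)\<^sup>2) / (b - a)"
    using \<open>a < b\<close> by (simp add: x'_def field_simps power2_eq_square)
  finally show ?thesis .
qed

lemma integral_density_cdf_kernel_square_le:
  fixes f :: "real \<Rightarrow> real"
  assumes "a < b" "x \<in> {a..(a + b) / 2}"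
    and [measurable]: "(\<lambda>t. indicator {a..b} t * f t) \<in> borel_measurable lborel"
    and f_bound: "\<And>t. t \<in> {a..b} \<Longrightarrow> \<bar>f t\<bar> \<le> C"
    and total: "(\<integral>t. indicator {a..b} t * f t \<partial>lborel) = 1"
  shows "(\<integral>t. indicator {a..b} t * f t * cdf_kernel a b x t \<partial>lborel)\<^sup>2
    \<le> ((b - a)\<^sup>2 / 48 + (x - (3 * a + b) / 4)\<^sup>2) / (b - a) * sigma_f a b f"
proof -
  define K where "K t = cdf_kernel a b x t * indicator {a..b} t" for t
  have [measurable]: "K \<in> borel_measurable lborel"
    unfolding K_def cdf_kernel_def by measurable
  have K_bound: "\<bar>K t\<bar> \<le> 1 * indicator {a..b} t" for t
    unfolding K_def by (rule cdf_kernel_bound[OF \<open>a < b\<close>])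
  have K_mean: "(\<integral>t. K t \<partial>lborel) = 0"
    unfolding K_def using assms(2) by (intro integral_cdf_kernel[OF \<open>a < b\<close>]) auto
  have f_bound': "\<bar>indicator {a..b} t * f t\<bar> \<le> C * indicator {a..b} t" for t
    using f_bound by (simp add: indicator_def)
  have "(\<integral>t. indicator {a..b} t * f t * cdf_kernel a b x t \<partial>lborel)
      = (\<integral>t. K t * (indicator {a..b} t * f t) \<partial>lborel)"
    by (rule Bochner_Integration.integral_cong) (simp_all add: K_def split: split_indicator)
  also have "\<dots>\<^sup>2 \<le> (\<integral>t. (K t)\<^sup>2 \<partial>lborel)
      * ((\<integral>t. (indicator {a..b} t * f t)\<^sup>2 \<partial>lborel) - 1\<^sup>2 / (b - a))"
    using integral_mean_zero_mult_square_le[OF \<open>a < b\<close> _ _ K_bound f_bound' K_mean] total by simp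
  finally show ?thesis
    using integral_cdf_kernel_square[OF assms(1,2)] integral_square_indicator_Icc[OF _ f_bound]
    by (simp add: K_def sigma_f_def)
qed

lemma (in prob_space) prob_le_eq_expectation:
  assumes [measurable]: "random_variable borel X"
  shows "prob {\<omega>\<in>space M. X \<omega> \<le> y} = expectation (\<lambda>\<omega>. indicator {..y} (X \<omega>))"
proof -
  have "expectation (\<lambda>\<omega>. indicator {..y} (X \<omega>)) = expectation (indicator {\<omega>\<in>space M. X \<omega> \<le> y})"
    by (rule Bochner_Integration.integral_cong) (auto simp: indicator_def)
  also have "\<dots> = prob {\<omega>\<in>space M. X \<omega> \<le> y}"
    by (subst Bochner_Integration.integral_indicator) (auto intro!: arg_cong[where f=prob])
  finally show ?thesis ..
qed

lemma (in prob_space) cdf_mean_eq_integral_cdf_kernel: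
  fixes X :: "'a \<Rightarrow> real"
  assumes X: "distributed M lborel X (\<lambda>t. ennreal (g t))" "\<And>t. 0 \<le> g t"
    and range: "\<forall>\<omega>\<in>space M. X \<omega> \<in> {a..b}"
  shows "(prob {\<omega>\<in>space M. X \<omega> \<le> x} + prob {\<omega>\<in>space M. X \<omega> \<le> a + b - x}) / 2
      - (b - expectation X) / (b - a) = (\<integral>t. g t * cdf_kernel a b x t \<partial>lborel)"
proof -
  have [measurable]: "random_variable borel X"
    using distributed_measurable[OF X(1)] by simp
  have int_X: "integrable M X"
    using range by (intro integrable_const_bound[where B="\<bar>a\<bar> + \<bar>b\<bar>"] AE_I2) auto
  have int_ind: "integrable M (\<lambda>\<omega>. indicator {..y} (X \<omega>) :: real)" for y
    by (intro integrable_const_bound[where B=1]) auto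
  have "(\<integral>t. g t * cdf_kernel a b x t \<partial>lborel) = expectation (\<lambda>\<omega>. cdf_kernel a b x (X \<omega>))"
    by (rule distributed_integral[OF X(1)]) (auto simp: cdf_kernel_def X(2))
  also have "\<dots> = (expectation (\<lambda>\<omega>. indicator {..x} (X \<omega>)) + expectation (\<lambda>\<omega>. indicator {..a + b - x} (X \<omega>))) / 2
      - (b - expectation X) / (b - a)"
    using int_X int_ind by (simp add: cdf_kernel_def diff_divide_distrib prob_space)
  finally show ?thesis by (simp add: prob_le_eq_expectation)
qed

theorem theorem4p3:
  fixes M :: "'s measure" and X :: "'s \<Rightarrow> real" and f :: "real \<Rightarrow> real"
    and a b x :: real
  assumes "prob_space M"
    and "a < b"
    and "\<forall>\<omega>\<in>space M. X \<omega> \<in> {a..b}"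
    and "distributed M lborel X (\<lambda>t. ennreal (indicator {a..b} t * f t))"
    and "\<forall>t\<in>{a..b}. 0 \<le> f t \<and> f t \<le> 1"
    and "(\<lambda>t. (f t)\<^sup>2) integrable_on {a..b}"
    and "x \<in> {a..(a+b)/2}"
  shows "let F = (\<lambda>y. measure M {\<omega>\<in>space M. X \<omega> \<le> y});
             EXv = integral\<^sup>L M X
         in \<bar>(F x + F (a + b - x)) / 2 - (b - EXv) / (b - a)\<bar>
            \<le> (b - a) powr (-1/2)
               * sqrt ((b - a)\<^sup>2 / 48 + (x - (3*a + b) / 4)\<^sup>2)
               * sqrt (sigma_f a b f)"
proof -
  interpret prob_space M by fact
  define g where "g t = indicator {a..b} t * f t" for t
  define A where "A = ((b - a)\<^sup>2 / 48 + (x - (3 * a + b) / 4)\<^sup>2) / (b - a)"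
  have g_nonneg: "0 \<le> g t" for t
    using assms(5) by (simp add: g_def indicator_def)
  have density: "distributed M lborel X (\<lambda>t. ennreal (g t))"
    using assms(4) by (simp add: g_def)
  have [measurable]: "g \<in> borel_measurable lborel"
    using distributed_real_measurable[OF g_nonneg density] .
  have "(\<integral>t. g t \<partial>lborel) = 1"
    using distributed_integral[OF density, of "\<lambda>_. 1"] g_nonneg by (simp add: prob_space)
  then have "(\<integral>t. g t * cdf_kernel a b x t \<partial>lborel)\<^sup>2 \<le> A * sigma_f a b f"
    unfolding g_def A_def using assms(5)
    by (intro integral_density_cdf_kernel_square_le[OF assms(2,7), where C=1]) (auto simp: g_def[symmetric])
  then have "\<bar>\<integral>t. g t * cdf_kernel a b x t \<partial>lborel\<bar> \<le> sqrt A * sqrt (sigma_f a b f)"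
    by (metis real_sqrt_abs real_sqrt_le_mono real_sqrt_mult)
  moreover have "sqrt A = (b - a) powr (-1/2) * sqrt ((b - a)\<^sup>2 / 48 + (x - (3 * a + b) / 4)\<^sup>2)"
    using \<open>a < b\<close> by (simp add: A_def real_sqrt_divide powr_minus_divide powr_half_sqrt)
  ultimately show ?thesis
    using cdf_mean_eq_integral_cdf_kernel[OF density g_nonneg assms(3), of x] by (simp add: Let_def)
qed

end
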